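(* Let $H_0,H_1$ be complex Hilbert spaces, $G$ a densely defined closed operator from $H_0$ into $H_1$ and $D$ a densely defined closed operator from $H_1$ into $H_0$ with $-G^*\subset D$, and assume the inclusion $\mathrm{dom}(G)\subset H_0$ is compact. Let $a,a_1,a_2,\ldots\in\mathcal L(H_1)$ and $\mu>0$ with $\mathrm{Re}\,a_n\ge\mu I$ for all $n$ and $\mathrm{Re}\,a\ge\mu I$. Suppose that $(a_n)$ converges to $a$ independent of the boundary conditions. Then $(\iota^*a_n\iota)^{-1}\to(\iota^*a\iota)^{-1}$ in the weak operator topology on $\mathcal L(\mathrm{ran}(G))$.
   Context: $\mathring G=-D^*$. Domains carry graph inner products, e.g. $(u,v)_{\mathrm{dom}(G)}=(u,v)_{H_0}+(Gu,Gv)_{H_1}$. Under the compactness assumption $\mathrm{ran}(G)$ is closed in $H_1$; it carries the $H_1$-norm, $\iota\colon\mathrm{ran}(G)\hookrightarrow H_1$ is the inclusion and $\iota^*$ the orthogonal projection of $H_1$ onto $\mathrm{ran}(G)$; $\iota^*a\iota$ and $\iota^*a_n\iota$ are invertible on $\mathrm{ran}(G)$. The sequence $(a_n)$ converges to $a$ independent of the boundary conditions if for every strictly increasing $(n_k)$ in $\mathbb N$, all $f,f_k\in H_0$ and all $u,u_k\in\mathrm{dom}(G)$ with $f_k\to f$ weakly in $H_0$, $u_k\to u$ weakly in $\mathrm{dom}(G)$, and $a_{n_k}Gu_k\in\mathrm{dom}(D)$ with $-Da_{n_k}Gu_k=f_k$ for all $k$, it follows that $a_{n_k}Gu_k\to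 aGu$ weakly in $H_1$. *)

theory Defs
  imports "HOL-Analysis.Analysis"
begin

class chilbert = real_normed_vector + complete_space +
  fixes scaleC :: "complex \<Rightarrow> 'a \<Rightarrow> 'a"
    and cinner :: "'a \<Rightarrow> 'a \<Rightarrow> complex"
  assumes scaleC_add_right: "scaleC c (x + y) = scaleC c x + scaleC c y"
    and scaleC_add_left: "scaleC (b + c) x = scaleC b x + scaleC c x"
    and scaleC_scaleC: "scaleC b (scaleC c x) = scaleC (b * c) x"
    and scaleC_one: "scaleC 1 x = x"
    and scaleR_scaleC: "scaleR r x = scaleC (complex_of_real r) x"
    and cinner_conj_sym: "cinner x y = cnj (cinner y x)"
    and cinner_add_left: "cinner (x + y) z = cinner x z + cinner y z"
    and cinner_scaleC_left: "cinner (scaleC c x) y = c * cinner x y"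
    and norm_cinner: "norm x = sqrt (Re (cinner x x))"

section \<open>Unbounded operators, given as (domain, function)\<close>

definition csubspace :: "'a::chilbert set \<Rightarrow> bool" where
  "csubspace S \<longleftrightarrow> 0 \<in> S \<and> (\<forall>x\<in>S. \<forall>y\<in>S. x + y \<in> S) \<and> (\<forall>c. \<forall>x\<in>S. scaleC c x \<in> S)"

definition clinear_on :: "'a::chilbert set \<Rightarrow> ('a \<Rightarrow> 'b::chilbert) \<Rightarrow> bool" where
  "clinear_on S f \<longleftrightarrow> (\<forall>x\<in>S. \<forall>y\<in>S. f (x + y) = f x + f y) \<and>
     (\<forall>c. \<forall>x\<in>S. f (scaleC c x) = scaleC c (f x))"

definition dd_closed_op :: "'a::chilbert set \<Rightarrow> ('a \<Rightarrow> 'b::chilbert) \<Rightarrow> bool" where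
  "dd_closed_op S f \<longleftrightarrow> csubspace S \<and> clinear_on S f \<and> closure S = UNIV \<and>
     closed {(x, f x) | x. x \<in> S}"

definition adj_dom :: "'a::chilbert set \<Rightarrow> ('a \<Rightarrow> 'b::chilbert) \<Rightarrow> 'b set" where
  "adj_dom S f = {v. \<exists>w. \<forall>u\<in>S. cinner (f u) v = cinner u w}"

definition adj :: "'a::chilbert set \<Rightarrow> ('a \<Rightarrow> 'b::chilbert) \<Rightarrow> 'b \<Rightarrow> 'a" where
  "adj S f v = (THE w. \<forall>u\<in>S. cinner (f u) v = cinner u w)"

definition neg_adj_subset ::
  "'a::chilbert set \<Rightarrow> ('a \<Rightarrow> 'b::chilbert) \<Rightarrow> 'b set \<Rightarrow> ('b \<Rightarrow> 'a) \<Rightarrow> bool" where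
  "neg_adj_subset SG G SD D \<longleftrightarrow> adj_dom SG G \<subseteq> SD \<and>
     (\<forall>v\<in>adj_dom SG G. D v = - adj SG G v)"

definition graph_inner :: "('a::chilbert \<Rightarrow> 'b::chilbert) \<Rightarrow> 'a \<Rightarrow> 'a \<Rightarrow> complex" where
  "graph_inner G u v = cinner u v + cinner (G u) (G v)"

definition compact_embedding :: "'a::chilbert set \<Rightarrow> ('a \<Rightarrow> 'b::chilbert) \<Rightarrow> bool" where
  "compact_embedding S G \<longleftrightarrow>
     (\<forall>B\<subseteq>S. (\<exists>M. \<forall>u\<in>B. Re (graph_inner G u u) \<le> M) \<longrightarrow> compact (closure B))"

definition bounded_clinear_op :: "('a::chilbert \<Rightarrow> 'a) \<Rightarrow> bool" where
  "bounded_clinear_op a \<longleftrightarrow> (\<forall>x y. a (x + y) = a x + a y) \<and>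
     (\<forall>c x. a (scaleC c x) = scaleC c (a x)) \<and> (\<exists>K. \<forall>x. norm (a x) \<le> norm x * K)"

definition re_ge :: "('a::chilbert \<Rightarrow> 'a) \<Rightarrow> real \<Rightarrow> bool" where
  "re_ge a \<mu> \<longleftrightarrow> (\<forall>x. Re (cinner (a x) x) \<ge> \<mu> * (norm x)\<^sup>2)"

definition weak_conv :: "(nat \<Rightarrow> 'a::chilbert) \<Rightarrow> 'a \<Rightarrow> bool" where
  "weak_conv x l \<longleftrightarrow> (\<forall>y. (\<lambda>k. cinner (x k) y) \<longlonglongrightarrow> cinner l y)"

definition weak_conv_graph ::
  "'a::chilbert set \<Rightarrow> ('a \<Rightarrow> 'b::chilbert) \<Rightarrow> (nat \<Rightarrow> 'a) \<Rightarrow> 'a \<Rightarrow> bool" where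
  "weak_conv_graph S G x l \<longleftrightarrow> (\<forall>k. x k \<in> S) \<and> l \<in> S \<and>
     (\<forall>v\<in>S. (\<lambda>k. graph_inner G (x k) v) \<longlonglongrightarrow> graph_inner G l v)"

definition cproj :: "'a::chilbert set \<Rightarrow> 'a \<Rightarrow> 'a" where
  "cproj M x = (THE p. p \<in> M \<and> (\<forall>m\<in>M. cinner (x - p) m = 0))"

definition conv_indep_bc ::
  "'a::chilbert set \<Rightarrow> ('a \<Rightarrow> 'b::chilbert) \<Rightarrow> 'b set \<Rightarrow> ('b \<Rightarrow> 'a) \<Rightarrow>
   (nat \<Rightarrow> 'b \<Rightarrow> 'b) \<Rightarrow> ('b \<Rightarrow> 'b) \<Rightarrow> bool" where
  "conv_indep_bc SG G SD D as a \<longleftrightarrow>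
     (\<forall>(n :: nat \<Rightarrow> nat) (f :: 'a) fk u uk.
        strict_mono n \<longrightarrow> weak_conv fk f \<longrightarrow> weak_conv_graph SG G uk u \<longrightarrow>
        (\<forall>k. as (n k) (G (uk k)) \<in> SD \<and> - D (as (n k) (G (uk k))) = fk k) \<longrightarrow>
        weak_conv (\<lambda>k. as (n k) (G (uk k))) (a (G u)))"

text \<open>(\<iota>^* b \<iota>)^{-1} on ran(G) (extended arbitrarily outside ran(G)).\<close>
definition compressed_inv :: "'b::chilbert set \<Rightarrow> ('b \<Rightarrow> 'b) \<Rightarrow> 'b \<Rightarrow> 'b" where
  "compressed_inv R b = inv_into R (\<lambda>z. cproj R (b z))"

definition wot_conv_on :: "'b::chilbert set \<Rightarrow> (nat \<Rightarrow> 'b \<Rightarrow> 'b) \<Rightarrow> ('b \<Rightarrow> 'b) \<Rightarrow> bool" where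
  "wot_conv_on R T L \<longleftrightarrow> (\<forall>x\<in>R. \<forall>y\<in>R. (\<lambda>n. cinner (T n x) y) \<longlonglongrightarrow> cinner (L x) y)"

end

theory Submission
  imports Defs "HOL-Library.Diagonal_Subsequence"
begin

text \<open>Write \<open>R = ran G\<close> and \<open>T\<^sub>n = (\<iota>\<^sup>* a\<^sub>n \<iota>)\<^sup>-\<^sup>1\<close>, \<open>T = (\<iota>\<^sup>* a \<iota>)\<^sup>-\<^sup>1\<close>. Coercivity makes all these
operators bounded by \<open>1/\<mu>\<close>, so it suffices to prove \<open>\<langle>T\<^sub>n x, y\<rangle> \<rightarrow> \<langle>T x, y\<rangle>\<close> for \<open>x\<close> in the
subspace \<open>R \<inter> dom G\<^sup>*\<close>, which is dense in \<open>R\<close>. For such \<open>x\<close> the vector \<open>a\<^sub>n T\<^sub>n x - x\<close> is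
orthogonal to \<open>R\<close>, i.e. lies in \<open>ker G\<^sup>* \<subseteq> ker D\<close>, so \<open>-D (a\<^sub>n T\<^sub>n x) = -D x\<close> is independent of
\<open>n\<close>. The compact embedding yields a Poincare inequality, hence \<open>T\<^sub>n x = G u\<^sub>n\<close> with \<open>(u\<^sub>n)\<close>
bounded in \<open>dom G\<close>. Along a weakly convergent subsequence \<open>u\<^sub>k \<rightharpoonup> u\<close> the convergence
independent of the boundary conditions gives \<open>a\<^sub>n\<^sub>k G u\<^sub>k \<rightharpoonup> a G u\<close>; projecting onto \<open>R\<close> gives
\<open>\<iota>\<^sup>* a G u = x\<close>, i.e. \<open>G u = T x\<close>. So every subsequence of \<open>\<langle>T\<^sub>n x, y\<rangle>\<close> has a further
subsequence converging to \<open>\<langle>T x, y\<rangle>\<close>.\<close>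

section \<open>Complex inner product spaces\<close>

lemma scaleC_zero_right[simp]: "scaleC c 0 = 0"
proof -
  have "scaleC c 0 = scaleC c (0 + 0)" by simp
  also have "\<dots> = scaleC c 0 + scaleC c 0" by (rule scaleC_add_right)
  finally show ?thesis by simp
qed

lemma scaleC_zero_left[simp]: "scaleC 0 x = 0"
  using scaleR_scaleC[of 0 x] by simp

lemma scaleC_minus_right: "scaleC c (- x) = - scaleC c x"
proof -
  have "scaleC c (- x) + scaleC c x = 0" using scaleC_add_right[of c "-x" x] by simp
  thus ?thesis by (simp add: eq_neg_iff_add_eq_0)
qed

lemma scaleC_diff_right: "scaleC c (x - y) = scaleC c x - scaleC c y"
  using scaleC_add_right[of c x "-y"] by (simp add: scaleC_minus_right)

lemma scaleC_scaleR_comm: "scaleC c (scaleR r x) = scaleR r (scaleC c x)"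
  by (simp add: scaleR_scaleC scaleC_scaleC mult.commute)

lemma cinner_add_right: "cinner x (y + z) = cinner x y + cinner x z"
  by (metis cinner_conj_sym cinner_add_left complex_cnj_add)

lemma cinner_scaleC_right: "cinner x (scaleC c y) = cnj c * cinner x y"
  by (metis cinner_conj_sym cinner_scaleC_left complex_cnj_mult)

lemma cinner_zero_left[simp]: "cinner 0 y = 0"
  using cinner_add_left[of 0 0 y] by simp

lemma cinner_zero_right[simp]: "cinner x 0 = 0"
  using cinner_add_right[of x 0 0] by simp

lemma cinner_minus_left: "cinner (- x) y = - cinner x y"
  using cinner_add_left[of x "-x" y] by (simp add: eq_neg_iff_add_eq_0 add.commute)

lemma cinner_minus_right: "cinner x (- y) = - cinner x y"
  using cinner_add_right[of x y "-y"] by (simp add: eq_neg_iff_add_eq_0 add.commute)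

lemma cinner_diff_left: "cinner (x - y) z = cinner x z - cinner y z"
  using cinner_add_left[of x "-y" z] by (simp add: cinner_minus_left)

lemma cinner_diff_right: "cinner x (y - z) = cinner x y - cinner x z"
  using cinner_add_right[of x y "-z"] by (simp add: cinner_minus_right)

lemma cinner_scaleR_left: "cinner (scaleR r x) y = complex_of_real r * cinner x y"
  by (simp add: scaleR_scaleC cinner_scaleC_left)

lemma cinner_scaleR_right: "cinner x (scaleR r y) = complex_of_real r * cinner x y"
  by (simp add: scaleR_scaleC cinner_scaleC_right)

lemma cinner_orth_sym: "cinner x y = 0 \<Longrightarrow> cinner y x = 0"
  by (metis cinner_conj_sym complex_cnj_zero)

lemma cinner_self: "cinner x x = complex_of_real ((norm x)\<^sup>2)"
proof -
  have "Im (cinner x x) = 0"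
    using cinner_conj_sym[of x x] by (metis Reals_cnj_iff complex_is_Real_iff)
  moreover have "Re (cinner x x) \<ge> 0"
    using norm_cinner[of x] norm_ge_zero[of x] by (metis real_sqrt_ge_0_iff)
  moreover have "Re (cinner x x) = (norm x)\<^sup>2"
    using norm_cinner[of x] calculation(2) by simp
  ultimately show ?thesis by (simp add: complex_eq_iff)
qed

lemma cinner_self_Re: "Re (cinner x x) = (norm x)\<^sup>2"
  by (simp add: cinner_self)

lemma cinner_self_eq_0[simp]: "cinner x x = 0 \<longleftrightarrow> x = 0"
  by (simp add: cinner_self)

lemma norm_scaleC[simp]: "norm (scaleC c x) = cmod c * norm x"
proof -
  have "(norm (scaleC c x))\<^sup>2 = Re (cinner (scaleC c x) (scaleC c x))" by (simp add: cinner_self_Re)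
  also have "cinner (scaleC c x) (scaleC c x) = c * cnj c * cinner x x"
    by (simp add: cinner_scaleC_left cinner_scaleC_right mult.assoc)
  also have "\<dots> = (cmod c)\<^sup>2 * (norm x)\<^sup>2"
    by (simp add: cinner_self complex_mult_cnj cmod_power2)
  finally have "(norm (scaleC c x))\<^sup>2 = (cmod c * norm x)\<^sup>2" by (simp add: power_mult_distrib)
  thus ?thesis by (simp add: power2_eq_iff_nonneg)
qed

lemma norm_add_sq: "(norm (x + y))\<^sup>2 = (norm x)\<^sup>2 + (norm y)\<^sup>2 + 2 * Re (cinner x y)"
proof -
  have "(norm (x + y))\<^sup>2 = Re (cinner (x+y) (x+y))" by (simp add: cinner_self_Re)
  also have "\<dots> = Re (cinner x x) + Re (cinner y y) + Re (cinner x y) + Re (cinner y x)"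
    by (simp add: cinner_add_left cinner_add_right)
  also have "Re (cinner y x) = Re (cinner x y)" by (subst cinner_conj_sym) simp
  finally show ?thesis by (simp add: cinner_self_Re)
qed

lemma norm_diff_sq: "(norm (x - y))\<^sup>2 = (norm x)\<^sup>2 + (norm y)\<^sup>2 - 2 * Re (cinner x y)"
  using norm_add_sq[of x "-y"] by (simp add: cinner_minus_right)

lemma Cauchy_Schwarz: "cmod (cinner x y) \<le> norm x * norm y"
proof (cases "y = 0")
  case True thus ?thesis by simp
next
  case False
  define t where "t = cinner x y / complex_of_real ((norm y)\<^sup>2)"
  have ny: "norm y > 0" using False by simp
  have "0 \<le> (norm (x - scaleC t y))\<^sup>2" by simp
  also have "\<dots> = (norm x)\<^sup>2 + (cmod t)\<^sup>2 * (norm y)\<^sup>2 - 2 * Re (cnj t * cinner x y)"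
    by (simp add: norm_diff_sq cinner_scaleC_right power_mult_distrib)
  also have "cnj t * cinner x y = complex_of_real ((cmod (cinner x y))\<^sup>2 / (norm y)\<^sup>2)"
    by (simp add: t_def complex_mult_cnj cmod_power2 mult.commute)
  also have "(cmod t)\<^sup>2 * (norm y)\<^sup>2 = (cmod (cinner x y))\<^sup>2 / (norm y)\<^sup>2"
    using ny by (simp add: t_def norm_divide power_divide norm_power)
      (simp add: field_simps power2_eq_square eval_nat_numeral)
  finally have "(cmod (cinner x y))\<^sup>2 / (norm y)\<^sup>2 \<le> (norm x)\<^sup>2" by simp
  hence "(cmod (cinner x y))\<^sup>2 \<le> (norm x * norm y)\<^sup>2"
    using ny by (simp add: field_simps power_mult_distrib)
  thus ?thesis by (rule power2_le_imp_le) simp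
qed

lemma bounded_bilinear_cinner: "bounded_bilinear cinner"
proof
  show "\<exists>K. \<forall>x y. norm (cinner x y) \<le> norm x * norm y * K"
    by (rule exI[of _ 1]) (simp add: Cauchy_Schwarz)
qed (simp_all add: cinner_add_left cinner_add_right cinner_scaleR_left cinner_scaleR_right
       scaleR_conv_of_real)

lemma bounded_bilinear_scaleC: "bounded_bilinear scaleC"
proof
  show "\<exists>K. \<forall>x y. norm (scaleC x y) \<le> norm x * norm y * K"
    by (rule exI[of _ 1]) simp
qed (simp_all add: scaleC_add_left scaleC_add_right scaleC_scaleR_comm scaleR_scaleC scaleC_scaleC
       scaleR_conv_of_real mult.commute)

lemma tendsto_cinner [tendsto_intros]:
  "(f \<longlongrightarrow> a) F \<Longrightarrow> (g \<longlongrightarrow> b) F \<Longrightarrow> ((\<lambda>x. cinner (f x) (g x)) \<longlongrightarrow> cinner a b) F"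
  by (rule bounded_bilinear.tendsto[OF bounded_bilinear_cinner])

lemma tendsto_scaleC [tendsto_intros]:
  "(f \<longlongrightarrow> a) F \<Longrightarrow> (g \<longlongrightarrow> b) F \<Longrightarrow> ((\<lambda>x. scaleC (f x) (g x)) \<longlongrightarrow> scaleC a b) F"
  by (rule bounded_bilinear.tendsto[OF bounded_bilinear_scaleC])

lemma csubspace_add: "csubspace M \<Longrightarrow> x \<in> M \<Longrightarrow> y \<in> M \<Longrightarrow> x + y \<in> M"
  by (simp add: csubspace_def)

lemma csubspace_scaleC: "csubspace M \<Longrightarrow> x \<in> M \<Longrightarrow> scaleC c x \<in> M"
  by (simp add: csubspace_def)

lemma csubspace_zero: "csubspace M \<Longrightarrow> 0 \<in> M"
  by (simp add: csubspace_def)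

lemma csubspace_scaleR: "csubspace M \<Longrightarrow> x \<in> M \<Longrightarrow> scaleR r x \<in> M"
  by (simp add: csubspace_def scaleR_scaleC)

lemma csubspace_diff: "csubspace M \<Longrightarrow> x \<in> M \<Longrightarrow> y \<in> M \<Longrightarrow> x - y \<in> M"
  using csubspace_add[of M x "-y"] csubspace_scaleR[of M y "-1"] by simp

lemma csubspace_UNIV: "csubspace (UNIV :: 'a::chilbert set)"
  by (simp add: csubspace_def)

lemma csubspace_Int: "csubspace A \<Longrightarrow> csubspace B \<Longrightarrow> csubspace (A \<inter> B)"
  by (simp add: csubspace_def)

lemma csubspace_closure:
  fixes M :: "'a::chilbert set"
  assumes sub: "csubspace M"
  shows "csubspace (closure M)"
  unfolding csubspace_def
proof (intro conjI ballI allI)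
  show "0 \<in> closure M" using csubspace_zero[OF sub] closure_subset by blast
next
  fix x y assume "x \<in> closure M" "y \<in> closure M"
  then obtain xs ys where xs: "\<forall>n. xs n \<in> M" "xs \<longlonglongrightarrow> x" and ys: "\<forall>n. ys n \<in> M" "ys \<longlonglongrightarrow> y"
    unfolding closure_sequential by blast
  have "\<forall>n. xs n + ys n \<in> M" using xs ys csubspace_add[OF sub] by blast
  moreover have "(\<lambda>n. xs n + ys n) \<longlonglongrightarrow> x + y" by (intro tendsto_intros xs ys)
  ultimately show "x + y \<in> closure M"
    unfolding closure_sequential by (intro exI[of _ "\<lambda>n. xs n + ys n"] conjI) auto
next
  fix c x assume "x \<in> closure M"
  then obtain xs where xs: "\<forall>n. xs n \<in> M" "xs \<longlonglongrightarrow> x" unfolding closure_sequential by blast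
  have "\<forall>n. scaleC c (xs n) \<in> M" using xs csubspace_scaleC[OF sub] by blast
  moreover have "(\<lambda>n. scaleC c (xs n)) \<longlonglongrightarrow> scaleC c x" by (intro tendsto_intros xs)
  ultimately show "scaleC c x \<in> closure M"
    unfolding closure_sequential by (intro exI[of _ "\<lambda>n. scaleC c (xs n)"] conjI) auto
qed

lemma clinear_on_diff:
  assumes "csubspace S" "clinear_on S G" "u \<in> S" "w \<in> S"
  shows "G (u - w) = G u - G w"
proof -
  have "G u = G ((u - w) + w)" by simp
  also have "\<dots> = G (u - w) + G w"
    using assms csubspace_diff[OF assms(1)] unfolding clinear_on_def by blast
  finally show ?thesis by simp
qed

lemma clinear_on_zero: "csubspace S \<Longrightarrow> clinear_on S G \<Longrightarrow> G 0 = 0"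
  using clinear_on_diff[of S G 0 0] csubspace_zero[of S] by simp

lemma csubspace_image:
  assumes sub: "csubspace S" and lin: "clinear_on S G"
  shows "csubspace (G ` S)"
  unfolding csubspace_def
proof (intro conjI ballI allI)
  show "0 \<in> G ` S"
    using csubspace_zero[OF sub] clinear_on_zero[OF sub lin] by (metis image_eqI)
next
  fix x y assume "x \<in> G ` S" "y \<in> G ` S"
  then obtain x' y' where "x' \<in> S" "y' \<in> S" "x = G x'" "y = G y'" by auto
  with lin csubspace_add[OF sub] show "x + y \<in> G ` S"
    unfolding clinear_on_def by (metis image_eqI)
next
  fix c x assume "x \<in> G ` S"
  then obtain x' where "x' \<in> S" "x = G x'" by auto
  with lin csubspace_scaleC[OF sub] show "scaleC c x \<in> G ` S"
    unfolding clinear_on_def by (metis image_eqI)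
qed

section \<open>Orthogonal projections\<close>

lemma norm_diff_sq_le_near_minimizers:
  fixes x m1 m2 :: "'a::chilbert"
  assumes d: "0 \<le> d" "d \<le> norm (x - scaleR (1/2) (m1 + m2))"
    and m1: "norm (x - m1) \<le> d + e1" and e1: "0 \<le> e1" "e1 \<le> 1"
    and m2: "norm (x - m2) \<le> d + e2" and e2: "0 \<le> e2" "e2 \<le> 1"
  shows "(norm (m1 - m2))\<^sup>2 \<le> (4 * d + 2) * (e1 + e2)"
proof -
  define u where "u = x - m1"
  define v where "v = x - m2"
  have "u + v = scaleR 2 (x - scaleR (1/2) (m1 + m2))"
    by (simp add: u_def v_def scaleR_diff_right algebra_simps scaleR_2)
  hence "norm (u + v) = 2 * norm (x - scaleR (1/2) (m1 + m2))" by simp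
  hence uv: "(norm (u + v))\<^sup>2 \<ge> 4 * d\<^sup>2" using d by (simp add: power_mult_distrib power_mono)
  have pl: "(norm (u - v))\<^sup>2 + (norm (u + v))\<^sup>2 = 2 * (norm u)\<^sup>2 + 2 * (norm v)\<^sup>2"
    by (simp add: norm_add_sq norm_diff_sq)
  have "(norm u)\<^sup>2 \<le> (d + e1)\<^sup>2" "(norm v)\<^sup>2 \<le> (d + e2)\<^sup>2"
    using m1 m2 by (simp_all add: u_def v_def power_mono)
  hence "(norm (u - v))\<^sup>2 \<le> 2 * (d + e1)\<^sup>2 + 2 * (d + e2)\<^sup>2 - 4 * d\<^sup>2"
    using pl uv by linarith
  also have "\<dots> = 4 * d * e1 + 2 * e1 * e1 + 4 * d * e2 + 2 * e2 * e2"
    by (simp add: power2_eq_square algebra_simps)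
  also have "\<dots> \<le> (4 * d + 2) * (e1 + e2)"
    using e1 e2 mult_right_le_one_le[of e1 e1] mult_right_le_one_le[of e2 e2]
    by (simp add: algebra_simps)
  finally show ?thesis by (simp add: u_def v_def norm_minus_commute)
qed

lemma nearest_point_exists:
  fixes M :: "'a::chilbert set"
  assumes sub: "csubspace M" and cl: "closed M"
  shows "\<exists>p\<in>M. \<forall>m\<in>M. norm (x - p) \<le> norm (x - m)"
proof -
  define d where "d = (INF m\<in>M. norm (x - m))"
  have ne: "(\<lambda>m. norm (x - m)) ` M \<noteq> {}" using csubspace_zero[OF sub] by blast
  have bdd: "bdd_below ((\<lambda>m. norm (x - m)) ` M)" by (auto intro!: bdd_belowI[of _ 0])
  have dle: "d \<le> norm (x - m)" if "m \<in> M" for m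
    unfolding d_def using that bdd by (auto intro!: cInf_lower)
  have d0: "d \<ge> 0" unfolding d_def using ne by (auto intro!: cInf_greatest)
  define e where "e n = 1 / real (Suc n)" for n
  have e: "0 \<le> e n" "e n \<le> 1" for n by (auto simp: e_def)
  have "\<exists>m\<in>M. norm (x - m) < d + e n" for n
    using cInf_less_iff[OF ne bdd, of "d + e n"] by (auto simp: d_def e_def)
  then obtain ms where ms: "\<And>n. ms n \<in> M" "\<And>n. norm (x - ms n) < d + e n" by metis
  have dist_ms: "(norm (ms a - ms b))\<^sup>2 \<le> (4 * d + 2) * (e a + e b)" for a b
  proof (rule norm_diff_sq_le_near_minimizers[OF d0 _ less_imp_le[OF ms(2)] e less_imp_le[OF ms(2)] e])
    show "d \<le> norm (x - scaleR (1/2) (ms a + ms b))"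
      by (intro dle csubspace_scaleR csubspace_add sub ms(1))
  qed
  have "Cauchy ms"
  proof (rule metric_CauchyI)
    fix eps :: real assume eps: "eps > 0"
    obtain N :: nat where N: "2 * (4 * d + 2) / eps\<^sup>2 < real N" using reals_Archimedean2 by blast
    show "\<exists>N. \<forall>m\<ge>N. \<forall>n\<ge>N. dist (ms m) (ms n) < eps"
    proof (intro exI allI impI)
      fix a b assume "a \<ge> N" "b \<ge> N"
      hence "e a \<le> 1 / real (Suc N)" "e b \<le> 1 / real (Suc N)" by (simp_all add: e_def frac_le)
      hence "(4 * d + 2) * (e a + e b) \<le> (4 * d + 2) * (2 / real (Suc N))"
        using d0 by (intro mult_left_mono) simp_all
      also have "\<dots> < eps\<^sup>2"
      proof -
        have "2 * (4 * d + 2) < eps\<^sup>2 * real N" using N eps by (simp add: divide_simps mult.commute)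
        also have "\<dots> < eps\<^sup>2 * real (Suc N)" using eps by simp
        finally show ?thesis by (simp add: divide_simps mult.commute)
      qed
      finally have "(norm (ms a - ms b))\<^sup>2 < eps\<^sup>2" using dist_ms[of a b] by linarith
      thus "dist (ms a) (ms b) < eps" using eps by (simp add: dist_norm power_less_imp_less_base)
    qed
  qed
  then obtain p where lim: "ms \<longlonglongrightarrow> p" using Cauchy_convergent_iff convergent_def by blast
  have pM: "p \<in> M" using closed_sequentially[OF cl] ms(1) lim by blast
  have "(\<lambda>n. norm (x - ms n)) \<longlonglongrightarrow> norm (x - p)" by (intro tendsto_intros lim)
  moreover have "(\<lambda>n. d + e n) \<longlonglongrightarrow> d + 0"
    unfolding e_def by (intro tendsto_intros LIMSEQ_Suc[OF lim_inverse_n'[unfolded inverse_eq_divide]])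
  ultimately have "norm (x - p) \<le> d + 0"
    by (rule LIMSEQ_le) (use ms(2) in \<open>auto intro: less_imp_le\<close>)
  hence "\<forall>m\<in>M. norm (x - p) \<le> norm (x - m)" using dle by (auto intro: order_trans)
  with pM show ?thesis by blast
qed

text \<open>Perturbing \<open>p\<close> by \<open>s \<langle>x - p, m\<rangle> m\<close> with \<open>s = 1/(\<parallel>m\<parallel>\<^sup>2 + 1)\<close> strictly decreases the distance
to \<open>x\<close> unless \<open>\<langle>x - p, m\<rangle> = 0\<close>.\<close>

lemma nearest_point_orthogonal:
  fixes M :: "'a::chilbert set"
  assumes sub: "csubspace M" and pM: "p \<in> M" and pmin: "\<forall>m\<in>M. norm (x - p) \<le> norm (x - m)"
    and mM: "m \<in> M"
  shows "cinner (x - p) m = 0"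
proof (rule ccontr)
  define r where "r = x - p"
  define c where "c = cinner r m"
  define s where "s = 1 / ((norm m)\<^sup>2 + 1)"
  have pos: "(norm m)\<^sup>2 + 1 > 0" by (smt (verit) zero_le_power2)
  hence s0: "s > 0" by (simp add: s_def)
  assume "cinner (x - p) m \<noteq> 0"
  hence "s * (cmod c)\<^sup>2 > 0" using pos by (simp add: c_def r_def s_def)
  have "p + scaleC (complex_of_real s * c) m \<in> M"
    by (intro csubspace_add csubspace_scaleC sub pM mM)
  with pmin have "(norm r)\<^sup>2 \<le> (norm (r - scaleC (complex_of_real s * c) m))\<^sup>2"
    by (simp add: r_def algebra_simps power_mono)
  also have "\<dots> = (norm r)\<^sup>2 + (s * cmod c * norm m)\<^sup>2 - 2 * Re (cnj (complex_of_real s * c) * c)"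
    by (simp add: norm_diff_sq cinner_scaleC_right c_def norm_mult abs_of_pos[OF s0])
  also have "cnj (complex_of_real s * c) * c = complex_of_real (s * (cmod c)\<^sup>2)"
    by (simp add: complex_mult_cnj cmod_power2 mult.commute)
  finally have "2 * (s * (cmod c)\<^sup>2) \<le> (s * (cmod c)\<^sup>2) * (s * (norm m)\<^sup>2)"
    by (simp add: power2_eq_square algebra_simps)
  with \<open>s * (cmod c)\<^sup>2 > 0\<close> have "2 \<le> s * (norm m)\<^sup>2"
    using mult_le_cancel_left_pos[of "s * (cmod c)\<^sup>2" 2 "s * (norm m)\<^sup>2"] by (simp add: mult.commute)
  moreover have "s * (norm m)\<^sup>2 < 1" using pos by (simp add: s_def)
  ultimately show False by simp
qed

lemma proj_exists:
  fixes M :: "'a::chilbert set"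
  assumes "csubspace M" "closed M"
  shows "\<exists>p\<in>M. \<forall>m\<in>M. cinner (x - p) m = 0"
  using nearest_point_exists[OF assms, of x] nearest_point_orthogonal[OF assms(1)] by blast

lemma proj_unique:
  fixes M :: "'a::chilbert set"
  assumes sub: "csubspace M" and "p \<in> M" "q \<in> M"
    and "\<forall>m\<in>M. cinner (x - p) m = 0" "\<forall>m\<in>M. cinner (x - q) m = 0"
  shows "p = q"
proof -
  have "p - q \<in> M" using assms by (simp add: csubspace_diff)
  hence "cinner (x - q) (p - q) - cinner (x - p) (p - q) = 0" using assms by simp
  hence "cinner (p - q) (p - q) = 0" by (simp add: cinner_diff_left[symmetric])
  thus ?thesis by simp
qed

lemma
  fixes M :: "'a::chilbert set"
  assumes "csubspace M" "closed M"
  shows cproj_in: "cproj M x \<in> M"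
    and cproj_orth: "m \<in> M \<Longrightarrow> cinner (x - cproj M x) m = 0"
proof -
  have "\<exists>!p. p \<in> M \<and> (\<forall>m\<in>M. cinner (x - p) m = 0)"
    using proj_exists[OF assms, of x] proj_unique[OF assms(1)] by blast
  hence "cproj M x \<in> M \<and> (\<forall>m\<in>M. cinner (x - cproj M x) m = 0)"
    unfolding cproj_def by (rule theI')
  thus "cproj M x \<in> M" "m \<in> M \<Longrightarrow> cinner (x - cproj M x) m = 0" by auto
qed

lemma cproj_eqI:
  fixes M :: "'a::chilbert set"
  assumes "csubspace M" "closed M" "p \<in> M" "\<forall>m\<in>M. cinner (x - p) m = 0"
  shows "cproj M x = p"
  using proj_unique[OF assms(1) cproj_in[OF assms(1,2)] assms(3) _ assms(4)] cproj_orth[OF assms(1,2)]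
  by blast

lemma cinner_cproj_left:
  fixes M :: "'a::chilbert set"
  assumes "csubspace M" "closed M" "z \<in> M"
  shows "cinner (cproj M x) z = cinner x z"
  using cproj_orth[OF assms, of x] by (simp add: cinner_diff_left)

lemma cproj_add:
  fixes M :: "'a::chilbert set"
  assumes sub: "csubspace M" and cl: "closed M"
  shows "cproj M (x + y) = cproj M x + cproj M y"
proof (rule cproj_eqI[OF sub cl])
  show "cproj M x + cproj M y \<in> M" by (intro csubspace_add[OF sub] cproj_in[OF sub cl])
  have eq: "x + y - (cproj M x + cproj M y) = (x - cproj M x) + (y - cproj M y)" by simp
  show "\<forall>m\<in>M. cinner (x + y - (cproj M x + cproj M y)) m = 0"
    unfolding eq cinner_add_left using cproj_orth[OF sub cl] by simp
qed

lemma cproj_scaleC: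
  fixes M :: "'a::chilbert set"
  assumes sub: "csubspace M" and cl: "closed M"
  shows "cproj M (scaleC c x) = scaleC c (cproj M x)"
proof (rule cproj_eqI[OF sub cl])
  show "scaleC c (cproj M x) \<in> M" by (intro csubspace_scaleC[OF sub] cproj_in[OF sub cl])
  show "\<forall>m\<in>M. cinner (scaleC c x - scaleC c (cproj M x)) m = 0"
    using cproj_orth[OF sub cl] by (simp add: scaleC_diff_right[symmetric] cinner_scaleC_left)
qed

lemma cproj_diff:
  fixes M :: "'a::chilbert set"
  assumes "csubspace M" "closed M"
  shows "cproj M (x - y) = cproj M x - cproj M y"
  using cproj_add[OF assms, of "x - y" y] by simp

lemma norm_cproj_le:
  fixes M :: "'a::chilbert set"
  assumes sub: "csubspace M" and cl: "closed M"
  shows "norm (cproj M x) \<le> norm x"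
proof -
  have "cinner (cproj M x) (x - cproj M x) = 0"
    by (rule cinner_orth_sym[OF cproj_orth[OF sub cl cproj_in[OF sub cl]]])
  hence "(norm x)\<^sup>2 = (norm (cproj M x))\<^sup>2 + (norm (x - cproj M x))\<^sup>2"
    using norm_add_sq[of "cproj M x" "x - cproj M x"] by simp
  hence "(norm (cproj M x))\<^sup>2 \<le> (norm x)\<^sup>2" by simp
  thus ?thesis by (rule power2_le_imp_le) simp
qed

section \<open>Riesz representation\<close>

lemma riesz:
  fixes M :: "'a::chilbert set" and f :: "'a \<Rightarrow> complex"
  assumes sub: "csubspace M" and cl: "closed M"
    and add: "\<And>x y. x \<in> M \<Longrightarrow> y \<in> M \<Longrightarrow> f (x + y) = f x + f y"
    and hom: "\<And>c x. x \<in> M \<Longrightarrow> f (scaleC c x) = c * f x"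
    and bnd: "\<And>x. x \<in> M \<Longrightarrow> cmod (f x) \<le> K * norm x"
  shows "\<exists>w\<in>M. \<forall>m\<in>M. f m = cinner m w"
proof (cases "\<forall>m\<in>M. f m = 0")
  case True thus ?thesis using csubspace_zero[OF sub] by (auto intro!: bexI[of _ 0])
next
  case False
  then obtain m0 where m0: "m0 \<in> M" "f m0 \<noteq> 0" by auto
  define N where "N = {m\<in>M. f m = 0}"
  have fdiff: "f (x - y) = f x - f y" if "x \<in> M" "y \<in> M" for x y
    using add[of "x - y" y] that csubspace_diff[OF sub that] by simp
  have subN: "csubspace N" unfolding N_def csubspace_def
    using csubspace_zero[OF sub] hom[of 0 0] add csubspace_add[OF sub] csubspace_scaleC[OF sub] hom
    by auto
  have clN: "closed N"
    unfolding closed_sequential_limits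
  proof (intro allI impI, elim conjE)
    fix xs l assume xN: "\<forall>n. xs n \<in> N" and lim: "xs \<longlonglongrightarrow> l"
    have lM: "l \<in> M" using closed_sequentially[OF cl] xN lim by (auto simp: N_def)
    have "(\<lambda>n. K * norm (xs n - l)) \<longlonglongrightarrow> K * norm (l - l)" by (intro tendsto_intros lim)
    moreover have "cmod (f l) \<le> K * norm (xs n - l)" for n
      using fdiff[of "xs n" l] bnd[of "xs n - l"] csubspace_diff[OF sub, of "xs n" l] xN lM
      by (auto simp: N_def)
    ultimately have "cmod (f l) \<le> 0" by (intro LIMSEQ_le_const) auto
    thus "l \<in> N" using lM by (simp add: N_def)
  qed
  define q where "q = m0 - cproj N m0"
  have PN: "cproj N m0 \<in> N" by (rule cproj_in[OF subN clN])
  have qM: "q \<in> M" using PN m0 by (auto simp: q_def N_def intro: csubspace_diff[OF sub])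
  have fq: "f q = f m0" using fdiff[of m0 "cproj N m0"] PN m0 by (simp add: q_def N_def)
  have qorth: "cinner n q = 0" if "n \<in> N" for n
    using cproj_orth[OF subN clN that, of m0] by (simp add: q_def cinner_orth_sym)
  have q0: "q \<noteq> 0" using fq m0 hom[of m0 0] by auto
  show ?thesis
  proof (intro bexI[of _ "scaleC (cnj (f q) / complex_of_real ((norm q)\<^sup>2)) q"] ballI)
    show "scaleC (cnj (f q) / complex_of_real ((norm q)\<^sup>2)) q \<in> M" by (rule csubspace_scaleC[OF sub qM])
    fix m assume mM: "m \<in> M"
    \<comment> \<open>\<open>f m q - f q m\<close> lies in the kernel \<open>N\<close>, which is orthogonal to \<open>q\<close>\<close>
    define z where "z = scaleC (f m) q - scaleC (f q) m"
    have "z \<in> M" unfolding z_def by (intro csubspace_diff csubspace_scaleC sub qM mM)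
    moreover have "f z = 0" unfolding z_def
      using fdiff hom qM mM csubspace_scaleC[OF sub] by simp
    ultimately have "cinner z q = 0" by (simp add: qorth N_def)
    hence "f m * complex_of_real ((norm q)\<^sup>2) = f q * cinner m q"
      by (simp add: z_def cinner_diff_left cinner_scaleC_left cinner_self)
    thus "f m = cinner m (scaleC (cnj (f q) / complex_of_real ((norm q)\<^sup>2)) q)"
      using q0 by (simp add: cinner_scaleC_right field_simps)
  qed
qed

section \<open>Weak sequential compactness\<close>

lemma closed_convergent_cinner:
  fixes x :: "nat \<Rightarrow> 'a::chilbert"
  assumes bnd: "\<And>n. norm (x n) \<le> B"
  shows "closed {y. convergent (\<lambda>k. cinner (x k) y)}"
  unfolding closed_sequential_limits
proof (intro allI impI, elim conjE)
  fix ys y assume yL: "\<forall>n. ys n \<in> {y. convergent (\<lambda>k. cinner (x k) y)}" and lim: "ys \<longlonglongrightarrow> y"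
  define B' where "B' = \<bar>B\<bar> + 1"
  have B': "B' > 0" "\<And>n. norm (x n) \<le> B'"
    unfolding B'_def using bnd by (simp, smt (verit) abs_ge_self)
  show "y \<in> {y. convergent (\<lambda>k. cinner (x k) y)}"
    unfolding mem_Collect_eq Cauchy_convergent_iff[symmetric]
  proof (rule metric_CauchyI)
    fix e :: real assume e: "e > 0"
    obtain m where m: "norm (ys m - y) < e / (3 * B')"
      using LIMSEQ_D[OF lim, of "e / (3 * B')"] e B' by auto
    have "Cauchy (\<lambda>k. cinner (x k) (ys m))" using yL by (simp add: Cauchy_convergent_iff)
    then obtain N where N: "\<And>a b. a \<ge> N \<Longrightarrow> b \<ge> N \<Longrightarrow>
        dist (cinner (x a) (ys m)) (cinner (x b) (ys m)) < e / 3"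
      using e unfolding Cauchy_def by (meson divide_pos_pos zero_less_numeral)
    have close: "dist (cinner (x k) y) (cinner (x k) (ys m)) < e / 3" for k
    proof -
      have "dist (cinner (x k) y) (cinner (x k) (ys m)) = cmod (cinner (x k) (y - ys m))"
        by (simp add: dist_norm cinner_diff_right)
      also have "\<dots> \<le> B' * norm (ys m - y)"
        using Cauchy_Schwarz[of "x k" "y - ys m"] B'(2)[of k]
        by (simp add: norm_minus_commute) (meson mult_right_mono norm_ge_zero order_trans)
      also have "\<dots> < e / 3" using m B' by (simp add: field_simps)
      finally show ?thesis .
    qed
    show "\<exists>N. \<forall>a\<ge>N. \<forall>b\<ge>N. dist (cinner (x a) y) (cinner (x b) y) < e"
    proof (intro exI allI impI)
      fix a b assume "a \<ge> N" "b \<ge> N"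
      thus "dist (cinner (x a) y) (cinner (x b) y) < e"
        using close[of a] close[of b] N[of a b]
          dist_triangle[of "cinner (x a) y" "cinner (x b) y" "cinner (x a) (ys m)"]
          dist_triangle[of "cinner (x a) (ys m)" "cinner (x b) y" "cinner (x b) (ys m)"]
        by (simp add: dist_commute)
    qed
  qed
qed

text \<open>A diagonal subsequence makes \<open>\<langle>x\<^sub>k, x\<^sub>j\<rangle>\<close> converge for every \<open>j\<close>; the set of \<open>y\<close> for which
\<open>\<langle>x\<^sub>k, y\<rangle>\<close> converges is then a closed subspace containing all \<open>x\<^sub>j\<close> and hence everything, and
the limit functional is represented by Riesz.\<close>

lemma weak_compact:
  fixes x :: "nat \<Rightarrow> 'a::chilbert"
  assumes bnd: "\<And>n. norm (x n) \<le> B"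
  shows "\<exists>r w. strict_mono r \<and> weak_conv (x \<circ> r) w"
proof -
  define P where "P = (\<lambda>j (s::nat\<Rightarrow>nat). convergent (\<lambda>k. cinner (x (s k)) (x j)))"
  interpret S: subseqs P
  proof
    fix j and s :: "nat \<Rightarrow> nat"
    have "cmod (cinner (x (s k)) (x j)) \<le> B * norm (x j)" for k
      using Cauchy_Schwarz[of "x (s k)" "x j"] bnd[of "s k"] by (meson mult_right_mono norm_ge_zero order_trans)
    hence "bounded (range (\<lambda>k. cinner (x (s k)) (x j)))" unfolding bounded_iff by blast
    from bounded_imp_convergent_subsequence[OF this]
    obtain l r where "strict_mono r" "((\<lambda>k. cinner (x (s k)) (x j)) \<circ> r) \<longlonglongrightarrow> l" by blast
    thus "\<exists>r'. strict_mono r' \<and> P j (s \<circ> r')"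
      unfolding P_def convergent_def by (auto simp: o_def)
  qed
  define r where "r = S.diagseq"
  have r: "strict_mono r" unfolding r_def by (rule S.subseq_diagseq)
  define L where "L = {y. convergent (\<lambda>k. cinner (x (r k)) y)}"
  have xL: "x j \<in> L" for j
  proof -
    have "P j (S.diagseq \<circ> (+) (Suc j))"
      by (rule S.diagseq_holds) (auto simp: P_def o_def intro: convergent_subseq_convergent[unfolded o_def])
    hence "convergent (\<lambda>k. cinner (x (r (k + Suc j))) (x j))"
      by (simp add: P_def r_def o_def add.commute)
    hence "convergent (\<lambda>k. cinner (x (r k)) (x j))"
      by (rule convergent_ignore_initial_segment[THEN iffD1])
    thus ?thesis by (simp add: L_def)
  qed
  have subL: "csubspace L"
    unfolding csubspace_def L_def
    by (auto simp: cinner_add_right cinner_scaleC_right convergent_const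
        intro: convergent_add convergent_mult[OF convergent_const])
  have clL: "closed L" unfolding L_def using bnd by (rule closed_convergent_cinner)
  have allL: "y \<in> L" for y
  proof -
    have "cinner (x j) (y - cproj L y) = 0" for j
      using cproj_orth[OF subL clL xL] by (simp add: cinner_orth_sym)
    hence "y - cproj L y \<in> L" by (simp add: L_def convergent_const)
    from csubspace_add[OF subL this cproj_in[OF subL clL, of y]] show ?thesis by simp
  qed
  define F where "F y = lim (\<lambda>k. cinner (x (r k)) y)" for y
  have Flim: "(\<lambda>k. cinner (x (r k)) y) \<longlonglongrightarrow> F y" for y
    using allL[of y] by (simp add: L_def F_def convergent_LIMSEQ_iff)
  have "\<exists>w\<in>UNIV. \<forall>m\<in>UNIV. cnj (F m) = cinner m w"
  proof (rule riesz[OF csubspace_UNIV closed_UNIV, of "\<lambda>y. cnj (F y)" "\<bar>B\<bar>"])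
    fix y z
    have "(\<lambda>k. cinner (x (r k)) (y + z)) \<longlonglongrightarrow> F y + F z"
      unfolding cinner_add_right by (intro tendsto_intros Flim)
    thus "cnj (F (y + z)) = cnj (F y) + cnj (F z)" using Flim LIMSEQ_unique by fastforce
  next
    fix c y
    have "(\<lambda>k. cinner (x (r k)) (scaleC c y)) \<longlonglongrightarrow> cnj c * F y"
      unfolding cinner_scaleC_right by (intro tendsto_intros Flim)
    thus "cnj (F (scaleC c y)) = c * cnj (F y)" using Flim LIMSEQ_unique by fastforce
  next
    fix y
    have "(\<lambda>k. cmod (cinner (x (r k)) y)) \<longlonglongrightarrow> cmod (F y)" by (intro tendsto_intros Flim)
    moreover have "cmod (cinner (x (r k)) y) \<le> \<bar>B\<bar> * norm y" for k
      using Cauchy_Schwarz[of "x (r k)" y] bnd[of "r k"]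
      by (smt (verit, best) mult_right_mono norm_ge_zero)
    ultimately have "cmod (F y) \<le> \<bar>B\<bar> * norm y" by (intro LIMSEQ_le_const2) auto
    thus "cmod (cnj (F y)) \<le> \<bar>B\<bar> * norm y" by simp
  qed
  then obtain w where w: "\<And>m. cnj (F m) = cinner m w" by auto
  have "weak_conv (x \<circ> r) w"
    unfolding weak_conv_def
  proof
    fix y
    have "F y = cinner w y" using w[of y] by (metis cinner_conj_sym complex_cnj_cnj)
    thus "(\<lambda>k. cinner ((x \<circ> r) k) y) \<longlonglongrightarrow> cinner w y" using Flim[of y] by (simp add: o_def)
  qed
  with r show ?thesis by blast
qed

lemma weak_limit_in_closed_csubspace:
  fixes M :: "'a::chilbert set"
  assumes sub: "csubspace M" and cl: "closed M" and xM: "\<And>n. x n \<in> M" and wc: "weak_conv x w"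
  shows "w \<in> M"
proof -
  define d where "d = w - cproj M w"
  have orth: "cinner m d = 0" if "m \<in> M" for m
    using cproj_orth[OF sub cl that, of w] by (simp add: d_def cinner_orth_sym)
  have "(\<lambda>n. cinner (x n) d) \<longlonglongrightarrow> cinner w d" using wc by (simp add: weak_conv_def)
  moreover have "(\<lambda>n. cinner (x n) d) = (\<lambda>n. 0)" using orth xM by auto
  ultimately have "cinner w d = 0" using LIMSEQ_unique tendsto_const by metis
  moreover have "cinner (cproj M w) d = 0" by (rule orth[OF cproj_in[OF sub cl]])
  ultimately have "cinner d d = 0" by (simp add: d_def cinner_diff_left)
  hence "d = 0" by simp
  thus ?thesis using cproj_in[OF sub cl, of w] by (simp add: d_def)
qed

instantiation prod :: (chilbert, chilbert) chilbert
begin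

definition scaleC_prod_def: "scaleC c p = (scaleC c (fst p), scaleC c (snd p))"

definition cinner_prod_def: "cinner p q = cinner (fst p) (fst q) + cinner (snd p) (snd q)"

instance
proof
  fix c b :: complex and x y z :: "'a \<times> 'b" and r :: real
  show "scaleC c (x + y) = scaleC c x + scaleC c y"
    by (simp add: scaleC_prod_def scaleC_add_right)
  show "scaleC (b + c) x = scaleC b x + scaleC c x"
    by (simp add: scaleC_prod_def scaleC_add_left)
  show "scaleC b (scaleC c x) = scaleC (b * c) x"
    by (simp add: scaleC_prod_def scaleC_scaleC)
  show "scaleC 1 x = x"
    by (simp add: scaleC_prod_def scaleC_one)
  show "scaleR r x = scaleC (complex_of_real r) x"
    by (simp add: scaleC_prod_def scaleR_scaleC prod_eq_iff)
  show "cinner x y = cnj (cinner y x)"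
    by (simp add: cinner_prod_def) (metis cinner_conj_sym)
  show "cinner (x + y) z = cinner x z + cinner y z"
    by (simp add: cinner_prod_def cinner_add_left)
  show "cinner (scaleC c x) y = c * cinner x y"
    by (simp add: cinner_prod_def scaleC_prod_def cinner_scaleC_left algebra_simps)
  show "norm x = sqrt (Re (cinner x x))"
    by (simp add: cinner_prod_def norm_prod_def cinner_self_Re)
qed

end

lemma cinner_Pair: "cinner (a, b) (c, d) = cinner a c + cinner b d"
  by (simp add: cinner_prod_def)

section \<open>Compressions of coercive operators\<close>

lemma bounded_clinear_op_add: "bounded_clinear_op b \<Longrightarrow> b (x + y) = b x + b y"
  and bounded_clinear_op_scaleC: "bounded_clinear_op b \<Longrightarrow> b (scaleC c x) = scaleC c (b x)"
  by (simp_all add: bounded_clinear_op_def)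

lemma bounded_clinear_op_diff: "bounded_clinear_op b \<Longrightarrow> b (x - y) = b x - b y"
  using bounded_clinear_op_add[of b "x - y" y] by simp

lemma bounded_clinear_op_bound: "bounded_clinear_op b \<Longrightarrow> \<exists>K. \<forall>x. norm (b x) \<le> norm x * K"
  by (simp add: bounded_clinear_op_def)

locale compression =
  fixes R :: "'a::chilbert set" and b :: "'a \<Rightarrow> 'a" and \<mu> :: real
  assumes sub: "csubspace R" and cl: "closed R" and bounded_op: "bounded_clinear_op b"
    and mu: "\<mu> > 0" and coercive: "re_ge b \<mu>"
begin

definition compress :: "'a \<Rightarrow> 'a" where "compress z = cproj R (b z)"

lemma compress_in: "compress z \<in> R"
  by (simp add: compress_def cproj_in[OF sub cl])

lemma cinner_compress: "z \<in> R \<Longrightarrow> cinner (compress z) z = cinner (b z) z"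
  by (simp add: compress_def cinner_cproj_left[OF sub cl])

lemma compress_add: "compress (x + y) = compress x + compress y"
  by (simp add: compress_def bounded_clinear_op_add[OF bounded_op] cproj_add[OF sub cl])

lemma compress_diff: "compress (x - y) = compress x - compress y"
  by (simp add: compress_def bounded_clinear_op_diff[OF bounded_op] cproj_diff[OF sub cl])

lemma compress_scaleC: "compress (scaleC a x) = scaleC a (compress x)"
  by (simp add: compress_def bounded_clinear_op_scaleC[OF bounded_op] cproj_scaleC[OF sub cl])

lemma norm_compress_lower: "z \<in> R \<Longrightarrow> \<mu> * norm z \<le> norm (compress z)"
proof -
  assume z: "z \<in> R"
  have "\<mu> * (norm z)\<^sup>2 \<le> Re (cinner (b z) z)" using coercive by (simp add: re_ge_def)
  also have "\<dots> = Re (cinner (compress z) z)" using cinner_compress[OF z] by simp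
  also have "\<dots> \<le> cmod (cinner (compress z) z)" by (rule complex_Re_le_cmod)
  also have "\<dots> \<le> norm (compress z) * norm z" by (rule Cauchy_Schwarz)
  finally have "\<mu> * norm z * norm z \<le> norm (compress z) * norm z"
    by (simp add: power2_eq_square mult.assoc)
  thus ?thesis by (cases "norm z = 0") (auto simp: mult_le_cancel_right)
qed

lemma inj_on_compress: "inj_on compress R"
proof (rule inj_onI)
  fix x y assume "x \<in> R" "y \<in> R" "compress x = compress y"
  with norm_compress_lower[OF csubspace_diff[OF sub]] have "\<mu> * norm (x - y) \<le> 0"
    by (metis compress_diff diff_self norm_zero)
  thus "x = y" using mu by (simp add: mult_le_0_iff)
qed

lemma compress_bound: "\<exists>K. \<forall>x. norm (compress x) \<le> norm x * K"
  using bounded_clinear_op_bound[OF bounded_op] norm_cproj_le[OF sub cl] unfolding compress_def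
  by (meson order_trans)

lemma closed_compress_image: "closed (compress ` R)"
  unfolding closed_sequential_limits
proof (intro allI impI, elim conjE)
  fix ys y assume yQ: "\<forall>n. ys n \<in> compress ` R" and lim: "ys \<longlonglongrightarrow> y"
  hence "\<forall>n. \<exists>z. z \<in> R \<and> ys n = compress z" by blast
  then obtain zs where zR: "\<And>n. zs n \<in> R" and zs: "\<And>n. ys n = compress (zs n)" by metis
  have "Cauchy zs"
  proof (rule metric_CauchyI)
    fix e :: real assume e: "e > 0"
    obtain N where N: "\<And>m n. m \<ge> N \<Longrightarrow> n \<ge> N \<Longrightarrow> dist (ys m) (ys n) < \<mu> * e"
      using LIMSEQ_imp_Cauchy[OF lim] e mu unfolding Cauchy_def by (meson mult_pos_pos)
    show "\<exists>N. \<forall>m\<ge>N. \<forall>n\<ge>N. dist (zs m) (zs n) < e"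
    proof (intro exI allI impI)
      fix m n assume "m \<ge> N" "n \<ge> N"
      have "\<mu> * norm (zs m - zs n) \<le> norm (compress (zs m - zs n))"
        by (rule norm_compress_lower[OF csubspace_diff[OF sub zR zR]])
      also have "\<dots> = dist (ys m) (ys n)" by (simp add: compress_diff zs dist_norm)
      also have "\<dots> < \<mu> * e" using N \<open>m \<ge> N\<close> \<open>n \<ge> N\<close> by blast
      finally show "dist (zs m) (zs n) < e" using mu by (simp add: dist_norm)
    qed
  qed
  then obtain z where zlim: "zs \<longlonglongrightarrow> z" using Cauchy_convergent_iff convergent_def by blast
  have "z \<in> R" using closed_sequentially[OF cl] zR zlim by blast
  obtain K where K: "\<And>x. norm (compress x) \<le> norm x * K" using compress_bound by blast
  have "(\<lambda>n. norm (zs n - z) * K) \<longlonglongrightarrow> 0"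
    using zlim by (intro tendsto_mult_left_zero tendsto_norm_zero) (simp add: LIM_zero_iff)
  hence "(\<lambda>n. compress (zs n) - compress z) \<longlonglongrightarrow> 0"
    by (rule Lim_null_comparison[rotated]) (simp add: K compress_diff[symmetric])
  hence "(\<lambda>n. compress (zs n)) \<longlonglongrightarrow> compress z" by (simp add: LIM_zero_iff)
  hence "ys \<longlonglongrightarrow> compress z" by (simp add: zs[abs_def])
  hence "y = compress z" using lim LIMSEQ_unique by blast
  thus "y \<in> compress ` R" using \<open>z \<in> R\<close> by blast
qed

text \<open>Surjectivity: an element of \<open>R\<close> orthogonal to \<open>compress ` R\<close> is orthogonal to its own image,
so coercivity forces it to vanish.\<close>

lemma compress_image: "compress ` R = R"
proof
  show "compress ` R \<subseteq> R" using compress_in by blast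
  have subQ: "csubspace (compress ` R)"
    by (rule csubspace_image[OF sub]) (simp add: clinear_on_def compress_add compress_scaleC)
  note clQ = closed_compress_image
  show "R \<subseteq> compress ` R"
  proof
    fix x assume xR: "x \<in> R"
    define p where "p = cproj (compress ` R) x"
    have pQ: "p \<in> compress ` R" unfolding p_def by (rule cproj_in[OF subQ clQ])
    hence dR: "x - p \<in> R" using xR compress_in csubspace_diff[OF sub] by blast
    hence "cinner (x - p) (compress (x - p)) = 0" using cproj_orth[OF subQ clQ] by (simp add: p_def)
    hence "Re (cinner (b (x - p)) (x - p)) = 0"
      using cinner_compress[OF dR] cinner_orth_sym by fastforce
    moreover have "\<mu> * (norm (x - p))\<^sup>2 \<le> Re (cinner (b (x - p)) (x - p))"
      using coercive by (simp add: re_ge_def)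
    ultimately have "x = p" using mu by (simp add: mult_le_0_iff)
    thus "x \<in> compress ` R" using pQ by simp
  qed
qed

abbreviation T :: "'a \<Rightarrow> 'a" where "T \<equiv> compressed_inv R b"

lemma T_eq: "T = inv_into R compress"
  by (simp add: compressed_inv_def compress_def[abs_def])

lemma T_in: "x \<in> R \<Longrightarrow> T x \<in> R"
  unfolding T_eq using compress_image by (metis inv_into_into)

lemma compress_T: "x \<in> R \<Longrightarrow> compress (T x) = x"
  unfolding T_eq using compress_image by (metis f_inv_into_f)

lemma T_compress: "z \<in> R \<Longrightarrow> T (compress z) = z"
  unfolding T_eq using inj_on_compress by (rule inv_into_f_f)

lemma T_eqI:
  assumes "z \<in> R" "x \<in> R" "\<forall>r\<in>R. cinner (b z - x) r = 0"
  shows "T x = z"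
proof -
  have "compress z = x" unfolding compress_def by (rule cproj_eqI[OF sub cl assms(2,3)])
  thus ?thesis using T_compress[OF assms(1)] by simp
qed

lemma norm_T_le: "x \<in> R \<Longrightarrow> \<mu> * norm (T x) \<le> norm x"
  using norm_compress_lower[OF T_in] compress_T by metis

lemma T_diff: "x \<in> R \<Longrightarrow> y \<in> R \<Longrightarrow> T (x - y) = T x - T y"
  using T_compress[OF csubspace_diff[OF sub T_in T_in]] compress_diff compress_T by metis

lemma T_orth: "x \<in> R \<Longrightarrow> r \<in> R \<Longrightarrow> cinner (b (T x) - x) r = 0"
  using cproj_orth[OF sub cl, of r "b (T x)"] compress_T unfolding compress_def by metis

lemma cinner_T_lipschitz:
  assumes x: "x \<in> R" and x': "x' \<in> R"
  shows "dist (cinner (T x) y) (cinner (T x') y) \<le> norm y / \<mu> * dist x x'"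
proof -
  have "cmod (cinner (T x) y - cinner (T x') y) = cmod (cinner (T (x - x')) y)"
    by (simp add: T_diff[OF x x'] cinner_diff_left)
  also have "\<dots> \<le> norm (T (x - x')) * norm y" by (rule Cauchy_Schwarz)
  also have "\<dots> \<le> norm (x - x') / \<mu> * norm y"
    using norm_T_le[OF csubspace_diff[OF sub x x']] mu by (intro mult_right_mono) (simp_all add: field_simps)
  finally show ?thesis by (simp add: dist_norm mult.commute)
qed

end

section \<open>Closed operators with compactly embedded domain\<close>

lemma closed_graph_limit:
  assumes cl: "closed {(x, G x) | x. x \<in> S}" and uS: "\<And>n. u n \<in> S"
    and lim1: "u \<longlonglongrightarrow> a" and lim2: "(\<lambda>n. G (u n)) \<longlonglongrightarrow> b"
  shows "a \<in> S \<and> G a = b"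
proof -
  have "\<And>n. (u n, G (u n)) \<in> {(x, G x) | x. x \<in> S}" using uS by blast
  moreover have "(\<lambda>n. (u n, G (u n))) \<longlonglongrightarrow> (a, b)" by (intro tendsto_Pair lim1 lim2)
  ultimately have "(a, b) \<in> {(x, G x) | x. x \<in> S}" by (rule closed_sequentially[OF cl])
  thus ?thesis by auto
qed

locale closed_operator =
  fixes SG :: "'a::chilbert set" and G :: "'a \<Rightarrow> 'b::chilbert"
  assumes dd_closed: "dd_closed_op SG G"
begin

lemma csubspace_dom: "csubspace SG" and clinear: "clinear_on SG G"
  and dense_dom: "closure SG = UNIV" and closed_graph: "closed {(x, G x) | x. x \<in> SG}"
  using dd_closed by (auto simp: dd_closed_op_def)

lemma csubspace_range: "csubspace (G ` SG)"
  by (rule csubspace_image[OF csubspace_dom clinear])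

definition kernel :: "'a set" where "kernel = {u \<in> SG. G u = 0}"

lemma csubspace_kernel: "csubspace kernel"
  using csubspace_dom clinear clinear_on_zero[OF csubspace_dom clinear]
  unfolding csubspace_def clinear_on_def kernel_def by auto

lemma closed_kernel: "closed kernel"
  unfolding closed_sequential_limits
proof (intro allI impI, elim conjE)
  fix us l assume uK: "\<forall>n. us n \<in> kernel" and lim: "us \<longlonglongrightarrow> l"
  have "(\<lambda>n. G (us n)) \<longlonglongrightarrow> 0" using uK by (simp add: kernel_def)
  from closed_graph_limit[OF closed_graph _ lim this] uK show "l \<in> kernel" by (auto simp: kernel_def)
qed

definition perp :: "'a \<Rightarrow> 'a" where "perp u = u - cproj kernel u"

lemma perp_in_dom: "u \<in> SG \<Longrightarrow> perp u \<in> SG"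
  unfolding perp_def using cproj_in[OF csubspace_kernel closed_kernel]
  by (auto simp: kernel_def intro: csubspace_diff[OF csubspace_dom])

lemma G_perp: "u \<in> SG \<Longrightarrow> G (perp u) = G u"
  unfolding perp_def using cproj_in[OF csubspace_kernel closed_kernel, of u]
  by (subst clinear_on_diff[OF csubspace_dom clinear]) (auto simp: kernel_def)

lemma perp_orth_kernel: "k \<in> kernel \<Longrightarrow> cinner (perp u) k = 0"
  unfolding perp_def by (rule cproj_orth[OF csubspace_kernel closed_kernel])

text \<open>A limit of such a sequence would be a unit vector both in and orthogonal to the kernel.\<close>

lemma unit_seq_orth_kernel_G_not_tendsto_zero:
  assumes ce: "compact_embedding SG G"
    and ws: "\<And>n. ws n \<in> SG" "\<And>n k. k \<in> kernel \<Longrightarrow> cinner (ws n) k = 0" "\<And>n. norm (ws n) = 1"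
  shows "\<not> (\<lambda>n. G (ws n)) \<longlonglongrightarrow> 0"
proof
  assume G0: "(\<lambda>n. G (ws n)) \<longlonglongrightarrow> 0"
  then obtain N where N: "\<And>n. n \<ge> N \<Longrightarrow> norm (G (ws n)) < 1"
    using LIMSEQ_D[OF G0, of 1] by auto
  have "Re (graph_inner G (ws (n + N)) (ws (n + N))) \<le> 2" for n
    using N[of "n + N"] ws(3)[of "n + N"]
    by (simp add: graph_inner_def cinner_self_Re) (smt (verit) norm_ge_zero power_le_one)
  hence graph_bounded: "\<exists>M. \<forall>u\<in>range (\<lambda>n. ws (n + N)). Re (graph_inner G u u) \<le> M" by blast
  have "range (\<lambda>n. ws (n + N)) \<subseteq> SG" using ws(1) by blast
  from ce[unfolded compact_embedding_def, rule_format, OF this graph_bounded]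
  have "compact (closure (range (\<lambda>n. ws (n + N))))" .
  moreover have "\<forall>n. ws (n + N) \<in> closure (range (\<lambda>n. ws (n + N)))"
    by (intro allI closure_subset[THEN subsetD] rangeI)
  ultimately obtain l r where "l \<in> closure (range (\<lambda>n. ws (n + N)))" and r: "strict_mono r"
    and "((\<lambda>n. ws (n + N)) \<circ> r) \<longlonglongrightarrow> l"
    by (rule seq_compactE[OF compact_imp_seq_compact])
  hence lim: "(\<lambda>n. ws (r n + N)) \<longlonglongrightarrow> l" by (simp add: o_def)
  have "(\<lambda>n. G (ws (r n + N))) \<longlonglongrightarrow> 0"
    using LIMSEQ_subseq_LIMSEQ[OF LIMSEQ_ignore_initial_segment[OF G0, of N] r] by (simp add: o_def)
  with closed_graph_limit[OF closed_graph _ lim] ws(1) have "l \<in> kernel" by (simp add: kernel_def)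
  have "(\<lambda>n. cinner (ws (r n + N)) l) \<longlonglongrightarrow> cinner l l" using lim by (intro tendsto_intros)
  hence "cinner l l = 0" using ws(2)[OF \<open>l \<in> kernel\<close>] by (simp add: LIMSEQ_const_iff)
  moreover have "(\<lambda>n. norm (ws (r n + N))) \<longlonglongrightarrow> norm l" using lim by (intro tendsto_intros)
  hence "norm l = 1" using ws(3) by (simp add: LIMSEQ_const_iff)
  ultimately show False by simp
qed

lemma poincare_inequality:
  assumes ce: "compact_embedding SG G"
  obtains C where "C > 0" "\<And>v. v \<in> SG \<Longrightarrow> \<forall>k\<in>kernel. cinner v k = 0 \<Longrightarrow> norm v \<le> C * norm (G v)"
proof (rule ccontr)
  assume "\<not> thesis"
  have "\<exists>v. v \<in> SG \<and> (\<forall>k\<in>kernel. cinner v k = 0) \<and> norm v > real (Suc n) * norm (G v)" for n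
  proof (rule ccontr)
    assume "\<not> ?thesis"
    hence "\<And>v. v \<in> SG \<Longrightarrow> \<forall>k\<in>kernel. cinner v k = 0 \<Longrightarrow> norm v \<le> real (Suc n) * norm (G v)"
      by (auto simp: not_less)
    with that[of "real (Suc n)"] \<open>\<not> thesis\<close> show False by simp
  qed
  then obtain vs where "\<forall>n. vs n \<in> SG \<and> (\<forall>k\<in>kernel. cinner (vs n) k = 0) \<and>
      norm (vs n) > real (Suc n) * norm (G (vs n))"
    using choice[of "\<lambda>n v. v \<in> SG \<and> (\<forall>k\<in>kernel. cinner v k = 0) \<and> norm v > real (Suc n) * norm (G v)"]
    by blast
  hence vs: "\<And>n. vs n \<in> SG" "\<And>n k. k \<in> kernel \<Longrightarrow> cinner (vs n) k = 0"
    "\<And>n. norm (vs n) > real (Suc n) * norm (G (vs n))" by auto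
  have vs0: "norm (vs n) > 0" for n
  proof -
    have "0 \<le> real (Suc n) * norm (G (vs n))" by simp
    with vs(3)[of n] show ?thesis by linarith
  qed
  define ws where "ws n = scaleC (complex_of_real (1 / norm (vs n))) (vs n)" for n
  have ws: "ws n \<in> SG" "k \<in> kernel \<Longrightarrow> cinner (ws n) k = 0" "norm (ws n) = 1" for n k
    using vs vs0[of n]
    by (simp_all add: ws_def csubspace_scaleC[OF csubspace_dom] cinner_scaleC_left norm_divide)
  have "norm (G (ws n)) \<le> 1 / real (Suc n)" for n
  proof -
    have "G (ws n) = scaleC (complex_of_real (1 / norm (vs n))) (G (vs n))"
      using clinear vs(1)[of n] unfolding ws_def clinear_on_def by blast
    hence "norm (G (ws n)) = norm (G (vs n)) / norm (vs n)" using vs0[of n] by (simp add: norm_divide)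
    also have "\<dots> \<le> 1 / real (Suc n)"
      using vs(3)[of n] vs0[of n] by (simp add: divide_simps mult.commute)
    finally show ?thesis .
  qed
  hence "(\<lambda>n. G (ws n)) \<longlonglongrightarrow> 0"
    by (intro Lim_null_comparison[OF always_eventually LIMSEQ_Suc[OF lim_inverse_n']])
      (simp add: inverse_eq_divide)
  moreover have "\<not> (\<lambda>n. G (ws n)) \<longlonglongrightarrow> 0"
    by (rule unit_seq_orth_kernel_G_not_tendsto_zero[OF ce]) (use ws in auto)
  ultimately show False by blast
qed

lemma norm_perp_le:
  assumes ce: "compact_embedding SG G"
  obtains C where "C > 0" "\<And>u. u \<in> SG \<Longrightarrow> norm (perp u) \<le> C * norm (G u)"
proof -
  obtain C where C: "C > 0"
    "\<And>v. v \<in> SG \<Longrightarrow> \<forall>k\<in>kernel. cinner v k = 0 \<Longrightarrow> norm v \<le> C * norm (G v)"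
    using poincare_inequality[OF ce] by blast
  show ?thesis
  proof (rule that[OF C(1)])
    fix u assume u: "u \<in> SG"
    show "norm (perp u) \<le> C * norm (G u)"
      using C(2)[OF perp_in_dom[OF u]] perp_orth_kernel G_perp[OF u] by simp
  qed
qed

lemma range_preimage_bound:
  assumes ce: "compact_embedding SG G"
  obtains C where "C > 0" "\<And>y. y \<in> G ` SG \<Longrightarrow> \<exists>u\<in>SG. G u = y \<and> norm u \<le> C * norm y"
proof -
  obtain C where C: "C > 0" "\<And>u. u \<in> SG \<Longrightarrow> norm (perp u) \<le> C * norm (G u)"
    using norm_perp_le[OF ce] by blast
  show ?thesis
  proof (rule that[OF C(1)])
    fix y assume "y \<in> G ` SG"
    then obtain u where u: "u \<in> SG" "y = G u" by blast
    show "\<exists>u\<in>SG. G u = y \<and> norm u \<le> C * norm y"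
      using perp_in_dom[OF u(1)] G_perp[OF u(1)] C(2)[OF u(1)] u(2) by (auto intro!: bexI[of _ "perp u"])
  qed
qed

lemma closed_range:
  assumes ce: "compact_embedding SG G"
  shows "closed (G ` SG)"
  unfolding closed_sequential_limits
proof (intro allI impI, elim conjE)
  obtain C where C: "C > 0" "\<And>u. u \<in> SG \<Longrightarrow> norm (perp u) \<le> C * norm (G u)"
    using norm_perp_le[OF ce] by blast
  fix ys y assume yR: "\<forall>n. ys n \<in> G ` SG" and lim: "ys \<longlonglongrightarrow> y"
  from yR have "\<forall>n. \<exists>u. u \<in> SG \<and> G u = ys n" by (simp add: image_iff Bex_def eq_commute)
  then obtain us where "\<forall>n. us n \<in> SG \<and> G (us n) = ys n"
    using choice[of "\<lambda>n u. u \<in> SG \<and> G u = ys n"] by blast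
  hence us: "\<And>n. us n \<in> SG" "\<And>n. G (us n) = ys n" by auto
  have "Cauchy (\<lambda>n. perp (us n))"
  proof (rule metric_CauchyI)
    fix e :: real assume e: "e > 0"
    obtain N where N: "\<And>m n. m \<ge> N \<Longrightarrow> n \<ge> N \<Longrightarrow> dist (ys m) (ys n) < e / C"
      using LIMSEQ_imp_Cauchy[OF lim] e C(1) unfolding Cauchy_def by (meson divide_pos_pos)
    show "\<exists>N. \<forall>m\<ge>N. \<forall>n\<ge>N. dist (perp (us m)) (perp (us n)) < e"
    proof (intro exI allI impI)
      fix m n assume mn: "m \<ge> N" "n \<ge> N"
      have "perp (us m) - perp (us n) = perp (us m - us n)"
        by (simp add: perp_def cproj_diff[OF csubspace_kernel closed_kernel])
      also have "norm \<dots> \<le> C * norm (G (us m - us n))"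
        by (rule C(2)[OF csubspace_diff[OF csubspace_dom us(1) us(1)]])
      also have "G (us m - us n) = ys m - ys n"
        using clinear_on_diff[OF csubspace_dom clinear us(1) us(1)] us(2) by simp
      also have "C * norm (ys m - ys n) < C * (e / C)"
        using N[OF mn] C(1) by (intro mult_strict_left_mono) (auto simp: dist_norm)
      finally show "dist (perp (us m)) (perp (us n)) < e" using C(1) by (simp add: dist_norm)
    qed
  qed
  then obtain v where v: "(\<lambda>n. perp (us n)) \<longlonglongrightarrow> v"
    using Cauchy_convergent_iff convergent_def by blast
  have "(\<lambda>n. G (perp (us n))) \<longlonglongrightarrow> y" using lim us by (simp add: G_perp)
  with closed_graph_limit[OF closed_graph _ v] have "v \<in> SG \<and> G v = y"
    using perp_in_dom[OF us(1)] by blast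
  thus "y \<in> G ` SG" by blast
qed

end

section \<open>The adjoint and density of \<open>ran G \<inter> dom G\<^sup>*\<close>\<close>

context closed_operator
begin

lemma orth_dom_zero:
  assumes "\<forall>u\<in>SG. cinner u d = 0"
  shows "d = 0"
proof -
  have "closed {u. cinner u d = 0}"
    by (intro closed_Collect_eq continuous_on_id
        bounded_linear.continuous_on[OF bounded_bilinear.bounded_linear_left[OF bounded_bilinear_cinner]])
      simp
  moreover have "SG \<subseteq> {u. cinner u d = 0}" using assms by auto
  ultimately have "closure SG \<subseteq> {u. cinner u d = 0}" by (rule closure_minimal[rotated])
  hence "cinner d d = 0" using dense_dom by blast
  thus ?thesis by simp
qed

lemma adj_unique: "\<forall>u\<in>SG. cinner u w1 = cinner u w2 \<Longrightarrow> w1 = w2"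
  using orth_dom_zero[of "w1 - w2"] by (simp add: cinner_diff_right)

lemma adj_char:
  assumes "v \<in> adj_dom SG G"
  shows "\<forall>u\<in>SG. cinner (G u) v = cinner u (adj SG G v)"
proof -
  obtain w where w: "\<forall>u\<in>SG. cinner (G u) v = cinner u w" using assms by (auto simp: adj_dom_def)
  hence "\<exists>!w. \<forall>u\<in>SG. cinner (G u) v = cinner u w" by (metis adj_unique)
  thus ?thesis unfolding adj_def by (rule theI')
qed

lemma adj_of_orth_range:
  assumes "\<forall>u\<in>SG. cinner (G u) w = 0"
  shows "w \<in> adj_dom SG G" "adj SG G w = 0"
proof -
  show w: "w \<in> adj_dom SG G" using assms by (auto simp: adj_dom_def intro!: exI[of _ 0])
  show "adj SG G w = 0" using adj_char[OF w] assms by (intro adj_unique) simp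
qed

lemma csubspace_adj_dom: "csubspace (adj_dom SG G)"
  unfolding csubspace_def
proof (intro conjI ballI allI)
  show "0 \<in> adj_dom SG G" by (auto simp: adj_dom_def intro!: exI[of _ 0])
next
  fix x y assume x: "x \<in> adj_dom SG G" and y: "y \<in> adj_dom SG G"
  show "x + y \<in> adj_dom SG G" unfolding adj_dom_def
    using adj_char[OF x] adj_char[OF y]
    by (auto simp: cinner_add_right intro!: exI[of _ "adj SG G x + adj SG G y"])
next
  fix c x assume x: "x \<in> adj_dom SG G"
  show "scaleC c x \<in> adj_dom SG G" unfolding adj_dom_def
    using adj_char[OF x] by (auto simp: cinner_scaleC_right intro!: exI[of _ "scaleC c (adj SG G x)"])
qed

lemma neg_adj_subset_orth_range:
  assumes na: "neg_adj_subset SG G SD D" and dD: "dd_closed_op SD D"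
    and x: "x \<in> adj_dom SG G" and orth: "\<forall>r\<in>G ` SG. cinner (z - x) r = 0"
  shows "z \<in> SD \<and> D z = D x"
proof -
  have "\<forall>u\<in>SG. cinner (G u) (z - x) = 0" using orth by (simp add: cinner_orth_sym)
  from adj_of_orth_range[OF this] na have "z - x \<in> SD" "D (z - x) = 0"
    unfolding neg_adj_subset_def by auto
  moreover have "x \<in> SD" using na x unfolding neg_adj_subset_def by blast
  moreover have "csubspace SD" "clinear_on SD D" using dD by (auto simp: dd_closed_op_def)
  ultimately show ?thesis
    using csubspace_add[of SD x "z - x"] unfolding clinear_on_def by (metis add_0 add.commute diff_add_cancel)
qed

definition graph :: "('a \<times> 'b) set" where "graph = {(x, G x) | x. x \<in> SG}"

lemma csubspace_graph: "csubspace graph"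
proof -
  have "clinear_on SG (\<lambda>x. (x, G x))" using clinear by (simp add: clinear_on_def scaleC_prod_def)
  hence "csubspace ((\<lambda>x. (x, G x)) ` SG)" by (rule csubspace_image[OF csubspace_dom])
  moreover have "(\<lambda>x. (x, G x)) ` SG = graph" by (auto simp: graph_def)
  ultimately show ?thesis by simp
qed

lemma graph_riesz: "\<exists>u\<in>SG. \<forall>\<phi>\<in>SG. cinner \<phi> v = cinner \<phi> u + cinner (G \<phi>) (G u)"
proof -
  have "\<exists>w\<in>graph. \<forall>m\<in>graph. cinner (fst m) v = cinner m w"
  proof (rule riesz[OF csubspace_graph closed_graph[folded graph_def], of _ "norm v"])
    fix p :: "'a \<times> 'b"
    have "cmod (cinner (fst p) v) \<le> norm (fst p) * norm v" by (rule Cauchy_Schwarz)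
    also have "\<dots> \<le> norm p * norm v"
      using norm_fst_le[of "fst p" "snd p"] by (intro mult_right_mono) simp_all
    finally show "cmod (cinner (fst p) v) \<le> norm v * norm p" by (simp add: mult.commute)
  qed (simp_all add: cinner_add_left scaleC_prod_def cinner_scaleC_left)
  then obtain u where "u \<in> SG" "\<forall>m\<in>graph. cinner (fst m) v = cinner m (u, G u)"
    by (auto simp: graph_def)
  thus ?thesis by (auto simp: graph_def cinner_Pair)
qed

text \<open>If \<open>G v\<close> is orthogonal to \<open>ran G \<inter> dom G\<^sup>*\<close>, represent \<open>\<langle>\<cdot>, v\<rangle>\<close> in the graph inner product
by some \<open>u\<close>; then \<open>G u \<in> dom G\<^sup>*\<close>, and expanding \<open>\<parallel>v - u\<parallel>\<^sup>2\<close> gives \<open>\<parallel>v - u\<parallel>\<^sup>2 + \<parallel>G u\<parallel>\<^sup>2 = 0\<close>.\<close>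

lemma orth_range_adj_dom_zero:
  assumes vS: "v \<in> SG" and orth: "\<forall>n\<in>G ` SG \<inter> adj_dom SG G. cinner (G v) n = 0"
  shows "G v = 0"
proof -
  obtain u where u: "u \<in> SG" "\<forall>\<phi>\<in>SG. cinner \<phi> v = cinner \<phi> u + cinner (G \<phi>) (G u)"
    using graph_riesz by blast
  have "G u \<in> adj_dom SG G" unfolding adj_dom_def
    using u(2) by (auto simp: cinner_diff_right intro!: exI[of _ "v - u"])
  hence Gvu: "cinner (G v) (G u) = 0" using orth u(1) by blast
  have "cinner (v - u) (v - u) = cinner v v - cinner v u - cinner u v + cinner u u"
    by (simp add: cinner_diff_left cinner_diff_right)
  also have "\<dots> = - cinner (G u) (G u)"
    using u(2)[rule_format, OF vS] u(2)[rule_format, OF u(1)] Gvu by simp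
  finally have "Re (cinner (v - u) (v - u)) = Re (- cinner (G u) (G u))" by simp
  hence "(norm (v - u))\<^sup>2 + (norm (G u))\<^sup>2 = 0" by (simp add: cinner_self_Re)
  hence "v = u" by (simp add: sum_power2_eq_zero_iff)
  thus ?thesis using Gvu by simp
qed

lemma range_subset_closure_range_adj_dom:
  assumes ce: "compact_embedding SG G"
  shows "G ` SG \<subseteq> closure (G ` SG \<inter> adj_dom SG G)"
proof
  fix x assume xR: "x \<in> G ` SG"
  define N where "N = closure (G ` SG \<inter> adj_dom SG G)"
  have subN: "csubspace N"
    unfolding N_def by (intro csubspace_closure csubspace_Int csubspace_range csubspace_adj_dom)
  have clN: "closed N" by (simp add: N_def)
  have "N \<subseteq> G ` SG" unfolding N_def using closed_range[OF ce] by (simp add: closure_minimal)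
  hence "x - cproj N x \<in> G ` SG"
    using xR cproj_in[OF subN clN] csubspace_diff[OF csubspace_range] by blast
  then obtain v where v: "v \<in> SG" "G v = x - cproj N x" by (metis imageE)
  have "\<forall>n\<in>G ` SG \<inter> adj_dom SG G. cinner (G v) n = 0"
  proof
    fix n assume "n \<in> G ` SG \<inter> adj_dom SG G"
    hence "n \<in> N" unfolding N_def by (rule closure_subset[THEN subsetD])
    thus "cinner (G v) n = 0" using cproj_orth[OF subN clN] v(2) by simp
  qed
  from orth_range_adj_dom_zero[OF v(1) this] v(2) have "x = cproj N x" by simp
  thus "x \<in> closure (G ` SG \<inter> adj_dom SG G)" using cproj_in[OF subN clN, of x] by (simp add: N_def)
qed

end

section \<open>Convergence of the inverses\<close>

lemma LIMSEQ_subsubseq: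
  fixes s :: "nat \<Rightarrow> 'a::metric_space"
  assumes "\<And>r::nat \<Rightarrow> nat. strict_mono r \<Longrightarrow> \<exists>r'. strict_mono r' \<and> (\<lambda>k. s (r (r' k))) \<longlonglongrightarrow> L"
  shows "s \<longlonglongrightarrow> L"
proof (rule ccontr)
  assume "\<not> s \<longlonglongrightarrow> L"
  then obtain e where e: "e > 0" and "\<not> eventually (\<lambda>n. dist (s n) L < e) sequentially"
    unfolding tendsto_iff by blast
  hence "\<forall>m. \<exists>n\<ge>m. dist (s n) L \<ge> e" by (simp add: eventually_sequentially not_less)
  hence "infinite {n. dist (s n) L \<ge> e}" by (simp add: infinite_nat_iff_unbounded_le)
  then obtain r :: "nat \<Rightarrow> nat" where r: "strict_mono r" "\<And>n. dist (s (r n)) L \<ge> e"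
    using infinite_enumerate by blast
  obtain r' where "(\<lambda>k. s (r (r' k))) \<longlonglongrightarrow> L" using assms[OF r(1)] by blast
  hence "eventually (\<lambda>k. dist (s (r (r' k))) L < e) sequentially" using e by (rule tendstoD)
  then obtain k where "dist (s (r (r' k))) L < e" by (auto simp: eventually_sequentially)
  with r(2) show False by (simp add: not_le[symmetric])
qed

lemma LIMSEQ_dense_equi_lipschitz:
  fixes f :: "nat \<Rightarrow> 'a::metric_space \<Rightarrow> 'b::metric_space" and g :: "'a \<Rightarrow> 'b"
  assumes f_lip: "\<And>n x x'. x \<in> S \<Longrightarrow> x' \<in> S \<Longrightarrow> dist (f n x) (f n x') \<le> L * dist x x'"
    and g_lip: "\<And>x x'. x \<in> S \<Longrightarrow> x' \<in> S \<Longrightarrow> dist (g x) (g x') \<le> L * dist x x'"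
    and lim: "\<And>x. x \<in> D \<Longrightarrow> (\<lambda>n. f n x) \<longlonglongrightarrow> g x"
    and D: "D \<subseteq> S" "S \<subseteq> closure D" and x: "x \<in> S"
  shows "(\<lambda>n. f n x) \<longlonglongrightarrow> g x"
proof (rule metric_LIMSEQ_I)
  fix e :: real assume e: "e > 0"
  define \<delta> where "\<delta> = e / (3 * (\<bar>L\<bar> + 1))"
  have \<delta>: "\<delta> > 0" "\<bar>L\<bar> * \<delta> < e / 3" using e by (simp_all add: \<delta>_def field_simps)
  have "x \<in> closure D" using x D(2) by (rule subsetD[rotated])
  then obtain x' where x': "x' \<in> D" "dist x' x < \<delta>"
    using \<delta>(1) unfolding closure_approachable by (meson bexE)
  have "L * dist x x' \<le> \<bar>L\<bar> * dist x x'" by (intro mult_right_mono) simp_all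
  also have "\<dots> \<le> \<bar>L\<bar> * \<delta>" using x'(2) by (intro mult_left_mono) (simp_all add: dist_commute)
  also have "\<dots> < e / 3" by (rule \<delta>(2))
  finally have close: "L * dist x x' < e / 3" .
  obtain N where N: "\<And>n. n \<ge> N \<Longrightarrow> dist (f n x') (g x') < e / 3"
    using metric_LIMSEQ_D[OF lim[OF x'(1)], of "e / 3"] e by auto
  have "dist (f n x) (g x) < e" if "n \<ge> N" for n
  proof -
    have "dist (f n x) (g x) \<le> dist (f n x) (f n x') + dist (f n x') (g x') + dist (g x') (g x)"
      by (metis dist_triangle add_right_mono order_trans)
    also have "\<dots> < e / 3 + e / 3 + e / 3"
      using f_lip[OF x, of x' n] g_lip[OF x, of x'] x' D(1) N[OF that] close
      by (auto simp: dist_commute)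
    finally show ?thesis by simp
  qed
  thus "\<exists>N. \<forall>n\<ge>N. dist (f n x) (g x) < e" by blast
qed

context closed_operator
begin

lemma graph_weak_compact:
  fixes us :: "nat \<Rightarrow> 'a"
  assumes us: "\<And>k. us k \<in> SG" and bnd: "\<And>k. norm (us k) + norm (G (us k)) \<le> B"
  obtains r u where "strict_mono r" "u \<in> SG" "weak_conv_graph SG G (us \<circ> r) u"
    "weak_conv (\<lambda>k. G (us (r k))) (G u)"
proof -
  define p where "p k = (us k, G (us k))" for k
  have "norm (p k) \<le> B" for k using norm_Pair_le[of "us k" "G (us k)"] bnd[of k] by (simp add: p_def)
  from weak_compact[of p B, OF this] obtain r w where r: "strict_mono r" and wc: "weak_conv (p \<circ> r) w"
    by blast
  have "w \<in> graph"
    by (rule weak_limit_in_closed_csubspace[OF csubspace_graph closed_graph[folded graph_def] _ wc])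
      (simp add: p_def graph_def us)
  then obtain u where u: "u \<in> SG" "w = (u, G u)" by (auto simp: graph_def)
  have lim: "(\<lambda>k. cinner (us (r k)) v + cinner (G (us (r k))) z) \<longlonglongrightarrow> cinner u v + cinner (G u) z" for v z
    using wc[unfolded weak_conv_def, rule_format, of "(v, z)"] by (simp add: p_def u(2) cinner_Pair)
  show ?thesis
  proof (rule that[OF r u(1)])
    show "weak_conv_graph SG G (us \<circ> r) u"
      using us u(1) lim by (simp add: weak_conv_graph_def graph_inner_def)
    show "weak_conv (\<lambda>k. G (us (r k))) (G u)"
      using lim[of 0] by (simp add: weak_conv_def)
  qed
qed

lemma compressed_inv_tendsto_on_adj_dom:
  assumes ce: "compact_embedding SG G" and dD: "dd_closed_op SD D"
    and na: "neg_adj_subset SG G SD D" and cib: "conv_indep_bc SG G SD D as a"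
    and A: "compression (G ` SG) a \<mu>" and An: "\<And>n. compression (G ` SG) (as n) \<mu>"
    and x: "x \<in> G ` SG \<inter> adj_dom SG G" and y: "y \<in> G ` SG"
  shows "(\<lambda>n. cinner (compressed_inv (G ` SG) (as n) x) y) \<longlonglongrightarrow> cinner (compressed_inv (G ` SG) a x) y"
proof -
  let ?R = "G ` SG"
  let ?T = "\<lambda>n. compressed_inv ?R (as n) x"
  have xR: "x \<in> ?R" using x by blast
  have mu: "\<mu> > 0" using A by (simp add: compression_def)
  \<comment> \<open>\<open>a\<^sub>n T\<^sub>n x - x \<bottom> ran G\<close>, hence \<open>D (a\<^sub>n T\<^sub>n x) = D x\<close> for every \<open>n\<close>\<close>
  have D_eq: "as n (?T n) \<in> SD \<and> D (as n (?T n)) = D x" for n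
    by (rule neg_adj_subset_orth_range[OF na dD IntD2[OF x]]) (use compression.T_orth[OF An xR] in blast)
  obtain C where C: "C > 0" "\<And>y. y \<in> ?R \<Longrightarrow> \<exists>u\<in>SG. G u = y \<and> norm u \<le> C * norm y"
    using range_preimage_bound[OF ce] by blast
  show ?thesis
  proof (rule LIMSEQ_subsubseq)
    fix r :: "nat \<Rightarrow> nat" assume r: "strict_mono r"
    have "\<exists>u. u \<in> SG \<and> G u = ?T (r k) \<and> norm u \<le> C * norm (?T (r k))" for k
      using C(2)[OF compression.T_in[OF An xR]] by blast
    then obtain us where us: "\<And>k. us k \<in> SG" "\<And>k. G (us k) = ?T (r k)"
      "\<And>k. norm (us k) \<le> C * norm (?T (r k))" by metis
    have "norm (us k) + norm (G (us k)) \<le> (C + 1) * (norm x / \<mu>)" for k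
    proof -
      have "norm (us k) + norm (G (us k)) \<le> (C + 1) * norm (?T (r k))"
        using us(2,3)[of k] by (simp add: algebra_simps)
      also have "\<dots> \<le> (C + 1) * (norm x / \<mu>)"
        using compression.norm_T_le[OF An xR] mu C(1) by (intro mult_left_mono) (simp_all add: field_simps)
      finally show ?thesis .
    qed
    then obtain r' u where r': "strict_mono r'" and u: "u \<in> SG"
      and wcg: "weak_conv_graph SG G (us \<circ> r') u" and wG: "weak_conv (\<lambda>k. G (us (r' k))) (G u)"
      by (rule graph_weak_compact[OF us(1)])
    have wlim: "weak_conv (\<lambda>k. as ((r \<circ> r') k) (G ((us \<circ> r') k))) (a (G u))"
    proof (rule cib[unfolded conv_indep_bc_def, rule_format, OF strict_mono_o[OF r r'] _ wcg])
      show "weak_conv (\<lambda>k. - D x) (- D x)" by (simp add: weak_conv_def)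
      show "as ((r \<circ> r') k) (G ((us \<circ> r') k)) \<in> SD \<and> - D (as ((r \<circ> r') k) (G ((us \<circ> r') k))) = - D x"
        for k using D_eq us(2) by simp
    qed
    \<comment> \<open>projecting onto \<open>R\<close> identifies the limit: \<open>\<iota>\<^sup>* a G u = x\<close>\<close>
    have "cinner (a (G u) - x) z = 0" if z: "z \<in> ?R" for z
    proof -
      have "cinner (as ((r \<circ> r') k) (G ((us \<circ> r') k))) z = cinner x z" for k
        using compression.T_orth[OF An xR z] us(2) by (simp add: cinner_diff_left)
      hence "(\<lambda>k. cinner x z) \<longlonglongrightarrow> cinner (a (G u)) z"
        using wlim[unfolded weak_conv_def, rule_format, of z] by simp
      thus ?thesis by (simp add: LIMSEQ_const_iff cinner_diff_left)
    qed
    hence "compressed_inv ?R a x = G u" using u by (intro compression.T_eqI[OF A]) (simp_all add: xR)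
    with wG have "(\<lambda>k. cinner (?T (r (r' k))) y) \<longlonglongrightarrow> cinner (compressed_inv ?R a x) y"
      using us(2) by (simp add: weak_conv_def)
    with r' show "\<exists>r'. strict_mono r' \<and> (\<lambda>k. cinner (?T (r (r' k))) y) \<longlonglongrightarrow> cinner (compressed_inv ?R a x) y"
      by blast
  qed
qed

end

theorem proposition6p2:
  fixes SG :: "'h0::chilbert set" and G :: "'h0 \<Rightarrow> 'h1::chilbert"
    and SD :: "'h1 set" and D :: "'h1 \<Rightarrow> 'h0"
    and a :: "'h1 \<Rightarrow> 'h1" and as :: "nat \<Rightarrow> 'h1 \<Rightarrow> 'h1" and \<mu> :: real
  assumes "dd_closed_op SG G"
    and "dd_closed_op SD D"
    and "neg_adj_subset SG G SD D"
    and "compact_embedding SG G"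
    and "bounded_clinear_op a" and "\<And>n. bounded_clinear_op (as n)"
    and "\<mu> > 0"
    and "\<And>n. re_ge (as n) \<mu>" and "re_ge a \<mu>"
    and "conv_indep_bc SG G SD D as a"
  shows "wot_conv_on (G ` SG) (\<lambda>n. compressed_inv (G ` SG) (as n)) (compressed_inv (G ` SG) a)"
proof -
  interpret closed_operator SG G by unfold_locales (rule assms(1))
  let ?R = "G ` SG"
  have A: "compression ?R a \<mu>" and An: "compression ?R (as n) \<mu>" for n
    using csubspace_range closed_range[OF assms(4)] assms(5-9) by (simp_all add: compression_def)
  show ?thesis
    unfolding wot_conv_on_def
  proof (intro ballI)
    fix x y assume x: "x \<in> ?R" and y: "y \<in> ?R"
    show "(\<lambda>n. cinner (compressed_inv ?R (as n) x) y) \<longlonglongrightarrow> cinner (compressed_inv ?R a x) y"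
      by (rule LIMSEQ_dense_equi_lipschitz[where f = "\<lambda>n x. cinner (compressed_inv ?R (as n) x) y"
            and g = "\<lambda>x. cinner (compressed_inv ?R a x) y" and S = ?R and D = "?R \<inter> adj_dom SG G"
            and L = "norm y / \<mu>"])
        (use compression.cinner_T_lipschitz[OF An] compression.cinner_T_lipschitz[OF A]
          compressed_inv_tendsto_on_adj_dom[OF assms(4,2,3,10) A An _ y]
          range_subset_closure_range_adj_dom[OF assms(4)] x in auto)
  qed
qed

end
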